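(* Let $u$ and $v$ be two vertices of a graph $G$ such that $u\cong_m v$ and the distance between $u$ and $v$ in $G$ is more than $2m$. Then $u\cong^D_m v$, i.e. Duplicator wins the $m$-round differential game between $u$ and $v$.
   Context: Graphs are finite, simple, undirected, loopless, possibly labelled with unary predicates. $N(u)$ is the neighbourhood of $u$ and $D(u,v):=N(u)\,\Delta\,N(v)$. $u\cong_m v$ means Duplicator wins the standard $m$-round Ehrenfeucht–Fraïssé game on $(G,u)$ and $(G,v)$ (equivalently, $u,v$ satisfy the same FO formulas of quantifier rank $m$). Differential game from $(\bar a,\bar b)$ on a single graph $G$: in each round, with current tuples $(a_1,\dots,a_n),(b_1,\dots,b_n)$, Spoiler chooses $i\le n$ and $v\in D(a_i,b_i)$ and declares whether $v$ becomes $a_{n+1}$ or $b_{n+1}$ (if all $D(a_i,b_i)$ are empty, Duplicator wins); Duplicator answers with a vertex $w\in D(a_i,b_i)$ (same $i$), which becomes the other of $b_{n+1},a_{n+1}$. After the rounds, Duplicator wins iff $a_i\mapsto b_i$ is a label-preserving isomorphism between the induced subgraphs on the $a$'s and $b$'s. $u\cong^D_m v$ means Duplicator has a winning strategy in the $m$-round differential game from $((u),(v))$. *)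

theory Defs
  imports Main
begin

text \<open>A finite simple labelled graph: vertex set V, symmetric irreflexive edge
relation E on V, and labelling lab assigning to each vertex the set of unary
predicates it satisfies.\<close>

definition graph :: "'a set \<Rightarrow> ('a \<Rightarrow> 'a \<Rightarrow> bool) \<Rightarrow> bool" where
  "graph V E \<longleftrightarrow> finite V \<and> (\<forall>x y. E x y \<longrightarrow> x \<in> V \<and> y \<in> V)
     \<and> (\<forall>x y. E x y \<longrightarrow> E y x) \<and> (\<forall>x. \<not> E x x)"

definition nbhd :: "'a set \<Rightarrow> ('a \<Rightarrow> 'a \<Rightarrow> bool) \<Rightarrow> 'a \<Rightarrow> 'a set" where
  "nbhd V E u = {w \<in> V. E u w}"

definition Dset :: "'a set \<Rightarrow> ('a \<Rightarrow> 'a \<Rightarrow> bool) \<Rightarrow> 'a \<Rightarrow> 'a \<Rightarrow> 'a set" where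
  "Dset V E u v = (nbhd V E u - nbhd V E v) \<union> (nbhd V E v - nbhd V E u)"

definition partial_iso :: "('a \<Rightarrow> 'a \<Rightarrow> bool) \<Rightarrow> ('a \<Rightarrow> 'l set) \<Rightarrow> 'a list \<Rightarrow> 'a list \<Rightarrow> bool" where
  "partial_iso E lab as bs \<longleftrightarrow> length as = length bs \<and>
     (\<forall>i < length as. lab (as ! i) = lab (bs ! i)) \<and>
     (\<forall>i < length as. \<forall>j < length as.
        (as ! i = as ! j \<longleftrightarrow> bs ! i = bs ! j) \<and> (E (as ! i) (as ! j) \<longleftrightarrow> E (bs ! i) (bs ! j)))"

text \<open>Duplicator wins the standard k-round EF game from position (as, bs) on G vs G.\<close>
fun ef_win :: "'a set \<Rightarrow> ('a \<Rightarrow> 'a \<Rightarrow> bool) \<Rightarrow> ('a \<Rightarrow> 'l set) \<Rightarrow> nat \<Rightarrow> 'a list \<Rightarrow> 'a list \<Rightarrow> bool" where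
  "ef_win V E lab 0 as bs = partial_iso E lab as bs"
| "ef_win V E lab (Suc k) as bs =
     ((\<forall>x\<in>V. \<exists>y\<in>V. ef_win V E lab k (as @ [x]) (bs @ [y])) \<and>
      (\<forall>y\<in>V. \<exists>x\<in>V. ef_win V E lab k (as @ [x]) (bs @ [y])))"

definition ef_equiv :: "'a set \<Rightarrow> ('a \<Rightarrow> 'a \<Rightarrow> bool) \<Rightarrow> ('a \<Rightarrow> 'l set) \<Rightarrow> nat \<Rightarrow> 'a \<Rightarrow> 'a \<Rightarrow> bool" where
  "ef_equiv V E lab m u v \<longleftrightarrow> ef_win V E lab m [u] [v]"

text \<open>Duplicator wins the k-round differential game from position (as, bs).
If all D(a_i,b_i) are empty when a round is to be played, Duplicator wins.\<close>
fun diff_win :: "'a set \<Rightarrow> ('a \<Rightarrow> 'a \<Rightarrow> bool) \<Rightarrow> ('a \<Rightarrow> 'l set) \<Rightarrow> nat \<Rightarrow> 'a list \<Rightarrow> 'a list \<Rightarrow> bool" where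
  "diff_win V E lab 0 as bs = partial_iso E lab as bs"
| "diff_win V E lab (Suc k) as bs =
     ((\<forall>i < length as. Dset V E (as ! i) (bs ! i) = {}) \<or>
      (\<forall>i < length as. \<forall>x \<in> Dset V E (as ! i) (bs ! i).
         (\<exists>y \<in> Dset V E (as ! i) (bs ! i). diff_win V E lab k (as @ [x]) (bs @ [y])) \<and>
         (\<exists>y \<in> Dset V E (as ! i) (bs ! i). diff_win V E lab k (as @ [y]) (bs @ [x]))))"

definition diff_equiv :: "'a set \<Rightarrow> ('a \<Rightarrow> 'a \<Rightarrow> bool) \<Rightarrow> ('a \<Rightarrow> 'l set) \<Rightarrow> nat \<Rightarrow> 'a \<Rightarrow> 'a \<Rightarrow> bool" where
  "diff_equiv V E lab m u v \<longleftrightarrow> diff_win V E lab m [u] [v]"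

fun within_dist :: "('a \<Rightarrow> 'a \<Rightarrow> bool) \<Rightarrow> nat \<Rightarrow> 'a \<Rightarrow> 'a \<Rightarrow> bool" where
  "within_dist E 0 u v = (u = v)"
| "within_dist E (Suc k) u v = (u = v \<or> (\<exists>w. E u w \<and> within_dist E k w v))"

end

theory Submission
  imports Defs
begin

(*
  Duplicator copies a winning strategy of the ordinary game. The pebbles form two rows, row c
  starting at u and row d at v, with c_j and d_j within distance j of u resp. v; since u and v
  are more than 2m apart, c_j and d_l are distinct and non-adjacent whenever j + l < 2m.
  A Spoiler move x in D(c_i, d_i) is adjacent to exactly one of c_i, d_i, say c_i; it is
  played in the ordinary game on row c, and the answer y is adjacent to d_i by the partial
  isomorphism but not to c_i by the separation, so y is in D(c_i, d_i). The differential game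
  sees each pair (c_j, d_j) only up to orientation; at the end the isomorphism c_j -> d_j
  survives any swapping of pairs, again by the separation.
*)

lemma within_dist_mono: "within_dist E j a b \<Longrightarrow> j \<le> l \<Longrightarrow> within_dist E l a b"
proof (induction j arbitrary: a l)
  case 0
  then show ?case by (cases l) auto
next
  case (Suc j)
  then show ?case by (cases l) auto
qed

lemma within_dist_trans:
  "within_dist E j a b \<Longrightarrow> within_dist E l b c \<Longrightarrow> within_dist E (j + l) a c"
proof (induction j arbitrary: a)
  case 0
  then show ?case by simp
next
  case (Suc j)
  show ?case
  proof (cases "a = b")
    case True
    then show ?thesis using Suc.prems(2) within_dist_mono[of E l b c "Suc j + l"] by simp
  next
    case False
    then obtain w where "E a w" "within_dist E j w b" using Suc.prems(1) by auto
    then show ?thesis using Suc.IH Suc.prems(2) by auto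
  qed
qed

lemma within_dist_snoc: "within_dist E j a b \<Longrightarrow> E b c \<Longrightarrow> within_dist E (Suc j) a c"
  using within_dist_trans[of E j a b 1 c] by simp

lemma within_dist_sym:
  assumes "\<forall>x y. E x y \<longrightarrow> E y x" and "within_dist E j a b"
  shows "within_dist E j b a"
  using assms(2)
proof (induction j arbitrary: a)
  case 0
  then show ?case by simp
next
  case (Suc j)
  show ?case
  proof (cases "a = b")
    case True
    then show ?thesis by simp
  next
    case False
    then obtain w where "E a w" "within_dist E j w b" using Suc.prems by auto
    then show ?thesis using Suc.IH within_dist_snoc assms(1) by metis
  qed
qed

lemma far_apart_balls_separated:
  assumes sym: "\<forall>x y. E x y \<longrightarrow> E y x" and far: "\<not> within_dist E (2 * m) u v"
    and c: "within_dist E j u c" and d: "within_dist E l v d" and jl: "j + l < 2 * m"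
  shows "c \<noteq> d \<and> \<not> E c d"
proof -
  have dv: "within_dist E l d v" using within_dist_sym[OF sym d] .
  have short: "\<not> within_dist E n u v" if "n \<le> 2 * m" for n
    using far within_dist_mono[of E n u v] that by blast
  show ?thesis
  proof
    show "c \<noteq> d"
      using short[of "j + l"] within_dist_trans[OF c] dv jl by fastforce
    show "\<not> E c d"
      using short[of "Suc j + l"] within_dist_trans[OF within_dist_snoc[OF c] dv] jl by auto
  qed
qed

definition within_dist_seq :: "('a \<Rightarrow> 'a \<Rightarrow> bool) \<Rightarrow> 'a \<Rightarrow> 'a list \<Rightarrow> bool" where
  "within_dist_seq E u cs \<longleftrightarrow> (\<forall>j < length cs. within_dist E j u (cs ! j))"

lemma within_dist_seq_snoc:
  "within_dist_seq E u cs \<Longrightarrow> within_dist E j u c \<Longrightarrow> j \<le> length cs \<Longrightarrow>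
    within_dist_seq E u (cs @ [c])"
  unfolding within_dist_seq_def using within_dist_mono
  by (auto simp: nth_append less_Suc_eq)

lemma partial_iso_sym: "partial_iso E lab cs ds \<Longrightarrow> partial_iso E lab ds cs"
  unfolding partial_iso_def by auto

lemma partial_iso_butlast:
  assumes "partial_iso E lab (cs @ [x]) (ds @ [y])"
  shows "partial_iso E lab cs ds"
proof -
  have len: "length cs = length ds" using assms unfolding partial_iso_def by simp
  have prefix: "(cs @ [x]) ! i = cs ! i" "(ds @ [y]) ! i = ds ! i" if "i < length cs" for i
    using that len by (simp_all add: nth_append)
  show ?thesis unfolding partial_iso_def
  proof (intro conjI allI impI)
    fix i j assume i: "i < length cs" and j: "j < length cs"
    have "lab ((cs @ [x]) ! i) = lab ((ds @ [y]) ! i)"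
      "(cs @ [x]) ! i = (cs @ [x]) ! j \<longleftrightarrow> (ds @ [y]) ! i = (ds @ [y]) ! j"
      "E ((cs @ [x]) ! i) ((cs @ [x]) ! j) \<longleftrightarrow> E ((ds @ [y]) ! i) ((ds @ [y]) ! j)"
      using assms i j unfolding partial_iso_def by simp_all
    then show "lab (cs ! i) = lab (ds ! i)" "cs ! i = cs ! j \<longleftrightarrow> ds ! i = ds ! j"
      "E (cs ! i) (cs ! j) \<longleftrightarrow> E (ds ! i) (ds ! j)"
      using prefix i j by simp_all
  qed (use len in simp)
qed

lemma ef_win_imp_partial_iso: "ef_win V E lab k cs ds \<Longrightarrow> V \<noteq> {} \<Longrightarrow> partial_iso E lab cs ds"
proof (induction k arbitrary: cs ds)
  case 0
  then show ?case by simp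
next
  case (Suc k)
  obtain x where "x \<in> V" using Suc.prems(2) by blast
  then obtain y where "ef_win V E lab k (cs @ [x]) (ds @ [y])" using Suc.prems(1) by auto
  then show ?case using Suc.IH Suc.prems(2) partial_iso_butlast by metis
qed

lemma ef_win_sym: "ef_win V E lab k cs ds \<Longrightarrow> ef_win V E lab k ds cs"
proof (induction k arbitrary: cs ds)
  case 0
  then show ?case by (simp add: partial_iso_sym)
next
  case (Suc k)
  then show ?case by (metis ef_win.simps(2))
qed

lemma ef_win_Suc_adjacent_reply:
  assumes win: "ef_win V E lab (Suc k) cs ds" and "x \<in> V" and i: "i < length cs"
    and cx: "E (cs ! i) x"
  obtains y where "y \<in> V" "ef_win V E lab k (cs @ [x]) (ds @ [y])" "E (ds ! i) y"
proof -
  obtain y where y: "y \<in> V" and win': "ef_win V E lab k (cs @ [x]) (ds @ [y])"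
    using win \<open>x \<in> V\<close> by auto
  have iso: "partial_iso E lab (cs @ [x]) (ds @ [y])"
    using ef_win_imp_partial_iso[OF win'] y by auto
  then have "E ((cs @ [x]) ! i) ((cs @ [x]) ! length cs) \<longleftrightarrow> E ((ds @ [y]) ! i) ((ds @ [y]) ! length cs)"
    using i unfolding partial_iso_def by simp
  moreover have "length ds = length cs" using iso unfolding partial_iso_def by simp
  ultimately have "E (ds ! i) y" using cx i by (simp add: nth_append)
  with y win' that show ?thesis by blast
qed

lemma Dset_commute: "Dset V E c d = Dset V E d c"
  unfolding Dset_def by blast

lemma ef_win_far_reply_in_Dset:
  assumes sym: "\<forall>x y. E x y \<longrightarrow> E y x" and far: "\<not> within_dist E (2 * m) u v"
    and win: "ef_win V E lab (Suc k) cs ds" and i: "i < length cs" "i < m"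
    and cu: "within_dist E i u (cs ! i)" and dv: "within_dist E i v (ds ! i)"
    and "x \<in> V" and cx: "E (cs ! i) x"
  obtains y where "y \<in> Dset V E (cs ! i) (ds ! i)" "ef_win V E lab k (cs @ [x]) (ds @ [y])"
    "within_dist E (Suc i) v y"
proof -
  obtain y where y: "y \<in> V" "ef_win V E lab k (cs @ [x]) (ds @ [y])" "E (ds ! i) y"
    using ef_win_Suc_adjacent_reply[OF win \<open>x \<in> V\<close> i(1) cx] .
  have yv: "within_dist E (Suc i) v y" using within_dist_snoc[OF dv] y(3) .
  have "\<not> E (cs ! i) y"
    using far_apart_balls_separated[OF sym far cu yv] i(2) by simp
  then have "y \<in> Dset V E (cs ! i) (ds ! i)" using y unfolding Dset_def nbhd_def by simp
  with y(2) yv that show ?thesis by blast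
qed

lemma ef_win_far_Dset_reply:
  assumes g: "graph V E" and far: "\<not> within_dist E (2 * m) u v"
    and win: "ef_win V E lab (Suc k) cs ds" and i: "i < length cs" "i < m"
    and cu: "within_dist E i u (cs ! i)" and dv: "within_dist E i v (ds ! i)"
    and x: "x \<in> Dset V E (cs ! i) (ds ! i)"
  obtains c' d' y where "y \<in> Dset V E (cs ! i) (ds ! i)"
    and "(c' = x \<and> d' = y) \<or> (c' = y \<and> d' = x)"
    and "ef_win V E lab k (cs @ [c']) (ds @ [d'])"
    and "within_dist E (Suc i) u c'" and "within_dist E (Suc i) v d'"
proof -
  have sym: "\<forall>x y. E x y \<longrightarrow> E y x" using g unfolding graph_def by blast
  have "x \<in> V" using x unfolding Dset_def nbhd_def by blast
  consider "E (cs ! i) x" | "E (ds ! i) x" using x unfolding Dset_def nbhd_def by blast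
  then show ?thesis
  proof cases
    case 1
    obtain y where "y \<in> Dset V E (cs ! i) (ds ! i)" "ef_win V E lab k (cs @ [x]) (ds @ [y])"
      "within_dist E (Suc i) v y"
      using ef_win_far_reply_in_Dset[OF sym far win i cu dv \<open>x \<in> V\<close> 1] .
    with that show ?thesis using within_dist_snoc[OF cu 1] by blast
  next
    case 2
    have "partial_iso E lab cs ds" using ef_win_imp_partial_iso[OF win] \<open>x \<in> V\<close> by blast
    then have "i < length ds" using i(1) unfolding partial_iso_def by simp
    moreover have "\<not> within_dist E (2 * m) v u" using far within_dist_sym[OF sym] by blast
    ultimately obtain y where "y \<in> Dset V E (ds ! i) (cs ! i)"
      "ef_win V E lab k (ds @ [x]) (cs @ [y])" "within_dist E (Suc i) u y"
      using ef_win_far_reply_in_Dset[OF sym _ ef_win_sym[OF win] _ i(2) dv cu \<open>x \<in> V\<close> 2]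
      by blast
    with that show ?thesis
      using within_dist_snoc[OF dv 2] ef_win_sym Dset_commute by metis
  qed
qed

definition pairwise_swap :: "'a list \<Rightarrow> 'a list \<Rightarrow> 'a list \<Rightarrow> 'a list \<Rightarrow> bool" where
  "pairwise_swap as bs cs ds \<longleftrightarrow>
     length as = length cs \<and> length bs = length cs \<and> length ds = length cs \<and>
     (\<forall>j < length cs. (as ! j = cs ! j \<and> bs ! j = ds ! j) \<or> (as ! j = ds ! j \<and> bs ! j = cs ! j))"

lemma pairwise_swap_snoc:
  "pairwise_swap as bs cs ds \<Longrightarrow> (a = c \<and> b = d) \<or> (a = d \<and> b = c) \<Longrightarrow>
    pairwise_swap (as @ [a]) (bs @ [b]) (cs @ [c]) (ds @ [d])"
  unfolding pairwise_swap_def by (auto simp: nth_append less_Suc_eq)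

lemma partial_iso_pairwise_swap:
  assumes iso: "partial_iso E lab cs ds" and sw: "pairwise_swap as bs cs ds"
    and sym: "\<forall>x y. E x y \<longrightarrow> E y x"
    and apart: "\<And>i j. i < length cs \<Longrightarrow> j < length cs \<Longrightarrow> i \<noteq> j \<Longrightarrow>
      cs ! i \<noteq> ds ! j \<and> \<not> E (cs ! i) (ds ! j)"
  shows "partial_iso E lab as bs"
  unfolding partial_iso_def
proof (intro conjI allI impI)
  show "length as = length bs" using sw unfolding pairwise_swap_def by simp
  fix i j assume "i < length as" "j < length as"
  then have i: "i < length cs" and j: "j < length cs" using sw unfolding pairwise_swap_def by auto
  have iso_ij: "lab (cs ! i) = lab (ds ! i)" "cs ! i = cs ! j \<longleftrightarrow> ds ! i = ds ! j"
    "E (cs ! i) (cs ! j) \<longleftrightarrow> E (ds ! i) (ds ! j)"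
    using iso i j unfolding partial_iso_def by auto
  have sw_ij: "(as ! i = cs ! i \<and> bs ! i = ds ! i) \<or> (as ! i = ds ! i \<and> bs ! i = cs ! i)"
    "(as ! j = cs ! j \<and> bs ! j = ds ! j) \<or> (as ! j = ds ! j \<and> bs ! j = cs ! j)"
    using sw i j unfolding pairwise_swap_def by auto
  have cross: "cs ! i \<noteq> ds ! j \<and> cs ! j \<noteq> ds ! i \<and> \<not> E (cs ! i) (ds ! j) \<and> \<not> E (ds ! i) (cs ! j)"
    if "i \<noteq> j"
    using apart[OF i j that] apart[OF j i] that sym by blast
  show "lab (as ! i) = lab (bs ! i)" using iso_ij(1) sw_ij(1) by auto
  show "as ! i = as ! j \<longleftrightarrow> bs ! i = bs ! j"
    using sw_ij iso_ij(2) cross by (cases "i = j") auto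
  show "E (as ! i) (as ! j) \<longleftrightarrow> E (bs ! i) (bs ! j)"
    using sw_ij iso_ij(3) cross by (cases "i = j") auto
qed

lemma diff_win_if_ef_win_far:
  assumes g: "graph V E" and far: "\<not> within_dist E (2 * m) u v"
  shows "ef_win V E lab k cs ds \<Longrightarrow> length cs + k \<le> Suc m \<Longrightarrow>
    within_dist_seq E u cs \<Longrightarrow> within_dist_seq E v ds \<Longrightarrow> pairwise_swap as bs cs ds \<Longrightarrow>
    diff_win V E lab k as bs"
proof (induction k arbitrary: as bs cs ds)
  case 0
  have sym: "\<forall>x y. E x y \<longrightarrow> E y x" using g unfolding graph_def by blast
  have "cs ! i \<noteq> ds ! j \<and> \<not> E (cs ! i) (ds ! j)"
    if "i < length cs" "j < length cs" "i \<noteq> j" for i j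
  proof (rule far_apart_balls_separated[OF sym far])
    show "within_dist E i u (cs ! i)" using 0 that unfolding within_dist_seq_def by simp
    show "within_dist E j v (ds ! j)"
      using 0 that unfolding within_dist_seq_def pairwise_swap_def by simp
    show "i + j < 2 * m" using 0 that by simp
  qed
  then show ?case using partial_iso_pairwise_swap[OF _ 0(5) sym] 0(1) by simp
next
  case (Suc k)
  have len: "length as = length cs" "length ds = length cs"
    using Suc.prems(5) unfolding pairwise_swap_def by auto
  show ?case unfolding diff_win.simps
  proof (rule disjI2, intro allI impI ballI)
    fix i x assume i: "i < length as" and x: "x \<in> Dset V E (as ! i) (bs ! i)"
    have D: "Dset V E (as ! i) (bs ! i) = Dset V E (cs ! i) (ds ! i)"
      using Suc.prems(5) i len(1) Dset_commute unfolding pairwise_swap_def by metis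
    have i': "i < length cs" "i < m" using i len(1) Suc.prems(2) by auto
    have "within_dist E i u (cs ! i)" "within_dist E i v (ds ! i)"
      using Suc.prems(3,4) i' len(2) unfolding within_dist_seq_def by auto
    from ef_win_far_Dset_reply[OF g far Suc.prems(1) i' this x[unfolded D]]
    obtain c' d' y where y: "y \<in> Dset V E (cs ! i) (ds ! i)"
      and xy: "(c' = x \<and> d' = y) \<or> (c' = y \<and> d' = x)"
      and win: "ef_win V E lab k (cs @ [c']) (ds @ [d'])"
      and c'u: "within_dist E (Suc i) u c'" and d'v: "within_dist E (Suc i) v d'" .
    have next_pos: "diff_win V E lab k (as @ [a]) (bs @ [b])"
      if "(a = c' \<and> b = d') \<or> (a = d' \<and> b = c')" for a b
    proof (rule Suc.IH[OF win])
      show "length (cs @ [c']) + k \<le> Suc m" using Suc.prems(2) by simp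
      show "within_dist_seq E u (cs @ [c'])" "within_dist_seq E v (ds @ [d'])"
        using within_dist_seq_snoc[OF Suc.prems(3) c'u] within_dist_seq_snoc[OF Suc.prems(4) d'v]
          i' len(2) by simp_all
      show "pairwise_swap (as @ [a]) (bs @ [b]) (cs @ [c']) (ds @ [d'])"
        using pairwise_swap_snoc[OF Suc.prems(5) that] .
    qed
    show "(\<exists>y \<in> Dset V E (as ! i) (bs ! i). diff_win V E lab k (as @ [x]) (bs @ [y])) \<and>
          (\<exists>y \<in> Dset V E (as ! i) (bs ! i). diff_win V E lab k (as @ [y]) (bs @ [x]))"
      using y xy D next_pos by blast
  qed
qed

theorem lemma6p2:
  fixes V :: "'a set" and E :: "'a \<Rightarrow> 'a \<Rightarrow> bool" and lab :: "'a \<Rightarrow> 'l set"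
    and u v :: 'a and m :: nat
  assumes "graph V E" and "u \<in> V" and "v \<in> V"
    and "ef_equiv V E lab m u v"
    and "\<not> within_dist E (2 * m) u v"
  shows "diff_equiv V E lab m u v"
  unfolding diff_equiv_def
proof (rule diff_win_if_ef_win_far[OF assms(1,5)])
  show "ef_win V E lab m [u] [v]" using assms(4) unfolding ef_equiv_def .
  show "within_dist_seq E u [u]" "within_dist_seq E v [v]"
    unfolding within_dist_seq_def by simp_all
qed (simp_all add: pairwise_swap_def)

end
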